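(* Let $R$ be an integral domain which is an avoidance ring, and let $S$ be a ring with $R\subseteq S\subseteq \operatorname{Frac}(R)$. Then $S$ is an avoidance ring.
   Context: All rings are commutative with $1\neq 0$. An ideal $I$ of a ring $R$ has avoidance if whenever $I_1,\ldots,I_n$ are finitely many ideals of $R$ with $I\subseteq\bigcup_{k=1}^n I_k$, then $I\subseteq I_k$ for some $k$. A ring is an avoidance ring if every ideal of it has avoidance. *)

theory Defs
  imports Main
begin

text \<open>Rings are modelled as subrings (with the same 1) of an ambient field.
  A subring of a field is exactly an integral domain (up to isomorphism), and
  the fraction field of a subring R is the set of quotients a/b, a,b in R, b nonzero.\<close>

definition subring_of :: "'a::field set \<Rightarrow> bool" where
  "subring_of S \<longleftrightarrow> 0 \<in> S \<and> 1 \<in> S \<and>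
     (\<forall>x\<in>S. \<forall>y\<in>S. x + y \<in> S \<and> x * y \<in> S \<and> - x \<in> S)"

definition frac_field :: "'a::field set \<Rightarrow> 'a set" where
  "frac_field R = {a / b | a b. a \<in> R \<and> b \<in> R \<and> b \<noteq> 0}"

definition ideal_of :: "'a::field set \<Rightarrow> 'a set \<Rightarrow> bool" where
  "ideal_of S I \<longleftrightarrow> I \<subseteq> S \<and> 0 \<in> I \<and>
     (\<forall>x\<in>I. \<forall>y\<in>I. x + y \<in> I) \<and> (\<forall>x\<in>I. - x \<in> I) \<and>
     (\<forall>s\<in>S. \<forall>x\<in>I. s * x \<in> I)"

definition has_avoidance :: "'a::field set \<Rightarrow> 'a set \<Rightarrow> bool" where
  "has_avoidance S I \<longleftrightarrow>
     (\<forall>F. finite F \<and> (\<forall>J\<in>F. ideal_of S J) \<and> I \<subseteq> \<Union>F \<longrightarrow> (\<exists>J\<in>F. I \<subseteq> J))"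

definition avoidance_ring :: "'a::field set \<Rightarrow> bool" where
  "avoidance_ring S \<longleftrightarrow> (\<forall>I. ideal_of S I \<longrightarrow> has_avoidance S I)"

end

theory Submission
  imports Defs
begin

text \<open>Given ideals I and J_1, ..., J_n of S with I not contained in any J_k, pick witnesses
  x_k in I - J_k and a common denominator d in R of the x_k. Contracting the ideals scaled by d
  to R gives ideals of R; the contraction of dI is covered by those of the dJ_k, but cannot lie in
  any of them because d x_k does not, so R would fail to be an avoidance ring.\<close>

lemma subring_of_closed:
  assumes "subring_of R" "x \<in> R" "y \<in> R"
  shows "x + y \<in> R" "x * y \<in> R" "- x \<in> R"
  using assms by (auto simp: subring_of_def)

lemma common_denominator:
  fixes R :: "'a::field set"
  assumes "subring_of R" "finite X" "X \<subseteq> frac_field R"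
  shows "\<exists>d\<in>R. d \<noteq> 0 \<and> (\<forall>x\<in>X. d * x \<in> R)"
  using assms(2,3)
proof (induction X rule: finite_induct)
  case empty
  show ?case using assms(1) by (auto simp: subring_of_def intro!: bexI[of _ 1])
next
  case (insert x X)
  then obtain d where d: "d \<in> R" "d \<noteq> 0" "\<forall>y\<in>X. d * y \<in> R" by auto
  from insert obtain a b where ab: "a \<in> R" "b \<in> R" "b \<noteq> 0" "x = a / b"
    by (auto simp: frac_field_def)
  have "d * b * x = d * a" using ab by simp
  moreover have "d * b * y = b * (d * y)" for y by (simp add: ac_simps)
  ultimately have "\<forall>y\<in>insert x X. d * b * y \<in> R"
    using d ab subring_of_closed(2)[OF assms(1)] by (metis insert_iff)
  moreover have "d * b \<in> R" "d * b \<noteq> 0" using d ab subring_of_closed(2)[OF assms(1)] by auto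
  ultimately show ?case by blast
qed

definition scaled_contraction :: "'a::field set \<Rightarrow> 'a \<Rightarrow> 'a set \<Rightarrow> 'a set" where
  "scaled_contraction R d J = (\<lambda>y. d * y) ` J \<inter> R"

lemma ideal_of_scaled_contraction:
  assumes R: "subring_of R" and "R \<subseteq> S" and J: "ideal_of S J"
  shows "ideal_of R (scaled_contraction R d J)"
proof -
  let ?K = "scaled_contraction R d J"
  have "0 \<in> ?K"
    using J R by (force simp: scaled_contraction_def ideal_of_def subring_of_def)
  moreover have "a + b \<in> ?K" if ab: "a \<in> ?K" "b \<in> ?K" for a b
  proof -
    obtain u v where "u \<in> J" "v \<in> J" "a = d * u" "b = d * v" "a \<in> R" "b \<in> R"
      using ab by (auto simp: scaled_contraction_def)
    moreover have "u + v \<in> J" using J \<open>u \<in> J\<close> \<open>v \<in> J\<close> by (simp add: ideal_of_def)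
    ultimately show ?thesis
      using subring_of_closed(1)[OF R] by (force simp: scaled_contraction_def distrib_left)
  qed
  moreover have "- a \<in> ?K" if a: "a \<in> ?K" for a
  proof -
    obtain u where "u \<in> J" "a = d * u" "a \<in> R" using a by (auto simp: scaled_contraction_def)
    moreover have "- u \<in> J" using J \<open>u \<in> J\<close> by (simp add: ideal_of_def)
    ultimately show ?thesis
      using subring_of_closed(3)[OF R] by (force simp: scaled_contraction_def)
  qed
  moreover have "s * a \<in> ?K" if "s \<in> R" and a: "a \<in> ?K" for s a
  proof -
    obtain u where "u \<in> J" "a = d * u" "a \<in> R" using a by (auto simp: scaled_contraction_def)
    moreover have "s * u \<in> J" using J \<open>u \<in> J\<close> \<open>s \<in> R\<close> \<open>R \<subseteq> S\<close> by (auto simp: ideal_of_def)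
    moreover have "s * (d * u) = d * (s * u)" by (simp add: mult.left_commute)
    ultimately show ?thesis
      using subring_of_closed(2)[OF R \<open>s \<in> R\<close>] by (force simp: scaled_contraction_def)
  qed
  moreover have "?K \<subseteq> R" by (simp add: scaled_contraction_def)
  ultimately show ?thesis unfolding ideal_of_def by blast
qed

lemma scaled_contraction_Union_cover:
  assumes "I \<subseteq> \<Union>F"
  shows "scaled_contraction R d I \<subseteq> \<Union>(scaled_contraction R d ` F)"
  using assms by (auto simp: scaled_contraction_def)

lemma mem_scaled_contraction_cancel:
  fixes d :: "'a::field"
  assumes "d \<noteq> 0" "d * x \<in> scaled_contraction R d J"
  shows "x \<in> J"
  using assms by (auto simp: scaled_contraction_def)

theorem theorem3p13:
  fixes R S :: "'a::field set"
  assumes "subring_of R" and "avoidance_ring R"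
    and "subring_of S" and "R \<subseteq> S" and "S \<subseteq> frac_field R"
  shows "avoidance_ring S"
  unfolding avoidance_ring_def has_avoidance_def
proof (intro allI impI, rule ccontr)
  fix I F
  assume I: "ideal_of S I" and F: "finite F \<and> (\<forall>J\<in>F. ideal_of S J) \<and> I \<subseteq> \<Union>F"
    and not_contained: "\<not> (\<exists>J\<in>F. I \<subseteq> J)"
  have "\<forall>J\<in>F. \<exists>y. y \<in> I \<and> y \<notin> J" using not_contained by blast
  then obtain x where x: "\<And>J. J \<in> F \<Longrightarrow> x J \<in> I \<and> x J \<notin> J" by metis
  have "finite (x ` F)" using F by blast
  moreover have "x ` F \<subseteq> frac_field R" using x I assms(5) by (auto simp: ideal_of_def)
  ultimately obtain d where d: "d \<noteq> 0" "\<forall>y\<in>x ` F. d * y \<in> R"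
    using common_denominator[OF assms(1)] by blast
  let ?c = "scaled_contraction R d"
  have "has_avoidance R (?c I)"
    using assms(2) ideal_of_scaled_contraction[OF assms(1,4) I] by (simp add: avoidance_ring_def)
  moreover have "\<forall>K\<in>?c ` F. ideal_of R K"
    using F ideal_of_scaled_contraction[OF assms(1,4)] by blast
  moreover have "?c I \<subseteq> \<Union>(?c ` F)"
    using F by (intro scaled_contraction_Union_cover) blast
  moreover have "finite (?c ` F)" using F by blast
  ultimately have "\<exists>K\<in>?c ` F. ?c I \<subseteq> K" unfolding has_avoidance_def by blast
  then obtain J where J: "J \<in> F" "?c I \<subseteq> ?c J" by blast
  have "d * x J \<in> ?c I" using x[OF J(1)] d J(1) by (auto simp: scaled_contraction_def)
  then have "x J \<in> J" using J(2) mem_scaled_contraction_cancel[OF d(1)] by blast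
  then show False using x[OF J(1)] by blast
qed

end
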